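(* Let $\mathcal{S}$ be a finite elation generalized quadrangle of order $(s,t)$ with elation group $G$ and associated $4$-gonal family $(G,\{A_i\}_{i=0}^t,\{A_i^*\}_{i=0}^t)$, and let $\Delta:=\sum_{i=0}^t (A_i\setminus\{1\})$, $\Delta^*:=\sum_{i=0}^t (A_i^*\setminus\{1\})$ in $\mathbb{R}[G]$. Let $\chi$ be a nonprincipal linear character of $G$, extended linearly to a ring homomorphism $\mathbb{R}[G]\to\mathbb{C}$, and let $u$ and $u'$ be the numbers of indices $i$ with $A_i\le\ker(\chi)$ and with $A_i^*\le \ker(\chi)$ respectively. Then \[\chi(\Delta)=su-t-1,\qquad \chi(\Delta^* )=stu'-t-1,\] and $(u,u')$ is one of $(1,1)$, $(0,0)$, $(\tfrac{t}{s}+1,0)$.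
   Context: A generalized quadrangle of order $(s,t)$: each line has $s+1$ points, each point is on $t+1$ lines, and for each non-incident point-line pair $(P,\ell)$ there is a unique point on $\ell$ collinear with $P$. An elation about $P$ is an automorphism that is the identity or fixes each line through $P$ and no point not collinear with $P$. $\mathcal{S}$ is an elation generalized quadrangle with base point $P$ and elation group $G$ if $G$ consists of elations about $P$ and acts regularly on the points not collinear with $P$. The associated $4$-gonal family: fix a point $y$ not collinear with $P$, let $M_0,\dots,M_t$ be the lines through $y$, let $z_i$ be the unique point of $M_i$ collinear with $P$, and let $A_i$, $A_i^*$ be the stabilizers in $G$ of $M_i$ and $z_i$ respectively. In $\mathbb{R}[G]$ a subset is identified with the sum of its elements. $\ker(\chi)=\{g:\chi(g)=\chi(1)\}$. *)

theory Defs
  imports Complex_Main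
begin

type_synonym ('p,'l) aut = "('p \<Rightarrow> 'p) \<times> ('l \<Rightarrow> 'l)"

definition collinear :: "('p \<Rightarrow> 'l \<Rightarrow> bool) \<Rightarrow> 'l set \<Rightarrow> 'p \<Rightarrow> 'p \<Rightarrow> bool" where
  "collinear I Lns x y \<longleftrightarrow> (\<exists>l\<in>Lns. I x l \<and> I y l)"

definition GQ :: "'p set \<Rightarrow> 'l set \<Rightarrow> ('p \<Rightarrow> 'l \<Rightarrow> bool) \<Rightarrow> nat \<Rightarrow> nat \<Rightarrow> bool" where
  "GQ Pts Lns I s t \<longleftrightarrow>
     s \<ge> 1 \<and> t \<ge> 1 \<and>
     (\<forall>l\<in>Lns. card {x\<in>Pts. I x l} = s + 1) \<and>
     (\<forall>x\<in>Pts. card {l\<in>Lns. I x l} = t + 1) \<and>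
     (\<forall>x\<in>Pts. \<forall>y\<in>Pts. \<forall>l\<in>Lns. \<forall>m\<in>Lns.
         x \<noteq> y \<and> I x l \<and> I y l \<and> I x m \<and> I y m \<longrightarrow> l = m) \<and>
     (\<forall>x\<in>Pts. \<forall>l\<in>Lns. \<not> I x l \<longrightarrow>
         (\<exists>!z. z \<in> Pts \<and> I z l \<and> collinear I Lns x z))"

definition automorphism :: "'p set \<Rightarrow> 'l set \<Rightarrow> ('p \<Rightarrow> 'l \<Rightarrow> bool) \<Rightarrow> ('p,'l) aut \<Rightarrow> bool" where
  "automorphism Pts Lns I \<phi> \<longleftrightarrow>
     bij_betw (fst \<phi>) Pts Pts \<and> bij_betw (snd \<phi>) Lns Lns \<and>
     (\<forall>x\<in>Pts. \<forall>l\<in>Lns. I (fst \<phi> x) (snd \<phi> l) \<longleftrightarrow> I x l) \<and>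
     (\<forall>x. x \<notin> Pts \<longrightarrow> fst \<phi> x = x) \<and> (\<forall>l. l \<notin> Lns \<longrightarrow> snd \<phi> l = l)"

definition aut_one :: "('p,'l) aut" where
  "aut_one = (id, id)"

definition aut_mult :: "('p,'l) aut \<Rightarrow> ('p,'l) aut \<Rightarrow> ('p,'l) aut" where
  "aut_mult a b = (fst a \<circ> fst b, snd a \<circ> snd b)"

definition aut_group :: "'p set \<Rightarrow> 'l set \<Rightarrow> ('p \<Rightarrow> 'l \<Rightarrow> bool) \<Rightarrow> ('p,'l) aut set \<Rightarrow> bool" where
  "aut_group Pts Lns I G \<longleftrightarrow>
     (\<forall>\<phi>\<in>G. automorphism Pts Lns I \<phi>) \<and> aut_one \<in> G \<and>
     (\<forall>a\<in>G. \<forall>b\<in>G. aut_mult a b \<in> G) \<and>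
     (\<forall>a\<in>G. \<exists>b\<in>G. aut_mult a b = aut_one \<and> aut_mult b a = aut_one)"

definition elation :: "'p set \<Rightarrow> 'l set \<Rightarrow> ('p \<Rightarrow> 'l \<Rightarrow> bool) \<Rightarrow> 'p \<Rightarrow> ('p,'l) aut \<Rightarrow> bool" where
  "elation Pts Lns I P \<phi> \<longleftrightarrow>
     automorphism Pts Lns I \<phi> \<and>
     (\<phi> = aut_one \<or>
      ((\<forall>l\<in>Lns. I P l \<longrightarrow> snd \<phi> l = l) \<and>
       (\<forall>x\<in>Pts. \<not> collinear I Lns P x \<longrightarrow> fst \<phi> x \<noteq> x)))"

definition elation_GQ :: "'p set \<Rightarrow> 'l set \<Rightarrow> ('p \<Rightarrow> 'l \<Rightarrow> bool) \<Rightarrow> nat \<Rightarrow> nat \<Rightarrow> 'p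
    \<Rightarrow> ('p,'l) aut set \<Rightarrow> bool" where
  "elation_GQ Pts Lns I s t P G \<longleftrightarrow>
     GQ Pts Lns I s t \<and> P \<in> Pts \<and> aut_group Pts Lns I G \<and>
     (\<forall>\<phi>\<in>G. elation Pts Lns I P \<phi>) \<and>
     (\<forall>x\<in>Pts. \<forall>y\<in>Pts. \<not> collinear I Lns P x \<longrightarrow> \<not> collinear I Lns P y \<longrightarrow>
        (\<exists>!\<phi>. \<phi> \<in> G \<and> fst \<phi> x = y))"

definition lines_through :: "'l set \<Rightarrow> ('p \<Rightarrow> 'l \<Rightarrow> bool) \<Rightarrow> 'p \<Rightarrow> 'l set" where
  "lines_through Lns I y = {M\<in>Lns. I y M}"

definition proj_pt :: "'p set \<Rightarrow> 'l set \<Rightarrow> ('p \<Rightarrow> 'l \<Rightarrow> bool) \<Rightarrow> 'p \<Rightarrow> 'l \<Rightarrow> 'p" where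
  "proj_pt Pts Lns I P M = (THE z. z \<in> Pts \<and> I z M \<and> collinear I Lns P z)"

definition line_stab :: "('p,'l) aut set \<Rightarrow> 'l \<Rightarrow> ('p,'l) aut set" where
  "line_stab G M = {\<phi>\<in>G. snd \<phi> M = M}"

definition point_stab :: "('p,'l) aut set \<Rightarrow> 'p \<Rightarrow> ('p,'l) aut set" where
  "point_stab G z = {\<phi>\<in>G. fst \<phi> z = z}"

definition linear_character :: "('p,'l) aut set \<Rightarrow> (('p,'l) aut \<Rightarrow> complex) \<Rightarrow> bool" where
  "linear_character G \<chi> \<longleftrightarrow>
     (\<forall>g\<in>G. \<chi> g \<noteq> 0) \<and> (\<forall>a\<in>G. \<forall>b\<in>G. \<chi> (aut_mult a b) = \<chi> a * \<chi> b)"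

definition char_ker :: "('p,'l) aut set \<Rightarrow> (('p,'l) aut \<Rightarrow> complex) \<Rightarrow> ('p,'l) aut set" where
  "char_ker G \<chi> = {g\<in>G. \<chi> g = \<chi> aut_one}"

end

theory Submission
  imports Defs
begin

text \<open>Regularity of \<open>G\<close> on the points not collinear with \<open>P\<close> identifies \<open>A\<^sub>i\<close> with the
  points of \<open>M\<^sub>i\<close> other than \<open>z\<^sub>i\<close>, and \<open>A\<^sub>i\<^sup>*\<close> with the points collinear with \<open>z\<^sub>i\<close> but not
  with \<open>P\<close>; hence \<open>|A\<^sub>i| = s\<close>, \<open>|A\<^sub>i\<^sup>*| = st\<close> and \<open>A\<^sub>i \<le> A\<^sub>i\<^sup>*\<close>. A nonprincipal character sums
  to zero over \<open>G\<close>, and over a subgroup to its order or to zero according as the subgroup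
  lies in \<open>ker \<chi>\<close> or not; this gives \<open>\<chi>(\<Delta>)\<close> and \<open>\<chi>(\<Delta>\<^sup>*)\<close>. Every element of \<open>G\<close> outside
  \<open>A\<^sub>0\<^sup>*\<close> factors uniquely as \<open>ab\<close> with \<open>a \<in> A\<^sub>0\<close> and \<open>b \<in> A\<^sub>j - {1}\<close>, \<open>j \<noteq> 0\<close> (\<open>ay\<close> is the
  point of \<open>M\<^sub>0\<close> collinear with \<open>aby\<close>), so \<open>0 = \<chi>(G) = \<chi>(A\<^sub>0\<^sup>*) + \<chi>(A\<^sub>0)(\<chi>(\<Delta>) - \<chi>(A\<^sub>0) + 1)\<close>.
  If \<open>A\<^sub>0 \<le> ker \<chi>\<close> this forces \<open>u = 1\<close> or \<open>su = s + t\<close> according as \<open>A\<^sub>0\<^sup>* \<le> ker \<chi>\<close> or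
  not, and \<open>u' \<le> u\<close>.\<close>

lemma sum_eq_0_if_scaled_by_permutation:
  fixes g :: "'a \<Rightarrow> 'b::idom"
  assumes "bij_betw f A A" and "\<And>x. x \<in> A \<Longrightarrow> g (f x) = c * g x" and "c \<noteq> 1"
  shows "(\<Sum>x\<in>A. g x) = 0"
proof -
  have "(\<Sum>x\<in>A. g x) = (\<Sum>x\<in>A. g (f x))"
    by (rule sum.reindex_bij_betw[OF assms(1), symmetric])
  also have "\<dots> = c * (\<Sum>x\<in>A. g x)"
    using assms(2) by (simp add: sum_distrib_left)
  finally have "(1 - c) * (\<Sum>x\<in>A. g x) = 0"
    by (simp add: algebra_simps)
  then show ?thesis
    using assms(3) by simp
qed

lemma aut_mult_assoc: "aut_mult (aut_mult a b) c = aut_mult a (aut_mult b c)"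
  by (simp add: aut_mult_def comp_assoc)

lemma fst_aut_mult [simp]: "fst (aut_mult a b) = fst a \<circ> fst b"
  and snd_aut_mult [simp]: "snd (aut_mult a b) = snd a \<circ> snd b"
  and fst_aut_one [simp]: "fst aut_one = id"
  and snd_aut_one [simp]: "snd aut_one = id"
  and aut_mult_one_left [simp]: "aut_mult aut_one a = a"
  by (simp_all add: aut_mult_def aut_one_def)

locale elation_gq =
  fixes Pts :: "'p set" and Lns :: "'l set" and I :: "'p \<Rightarrow> 'l \<Rightarrow> bool"
    and s t :: nat and P y :: 'p and G :: "('p,'l) aut set"
  assumes finite_Pts: "finite Pts" and finite_Lns: "finite Lns"
    and elation_GQ: "elation_GQ Pts Lns I s t P G"
    and y_in_Pts: "y \<in> Pts" and y_not_coll: "\<not> collinear I Lns P y"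
begin

abbreviation coll where "coll \<equiv> collinear I Lns"
abbreviation Ly where "Ly \<equiv> lines_through Lns I y"
abbreviation z_of where "z_of M \<equiv> proj_pt Pts Lns I P M"

lemma collinearI: "l \<in> Lns \<Longrightarrow> I x l \<Longrightarrow> I x' l \<Longrightarrow> coll x x'"
  and collinear_sym: "coll x x' \<Longrightarrow> coll x' x"
  by (auto simp: collinear_def)

lemma GQ: "GQ Pts Lns I s t"
  using elation_GQ by (simp add: elation_GQ_def)

lemma s_ge_1: "s \<ge> 1" and t_ge_1: "t \<ge> 1"
  using GQ by (simp_all add: GQ_def)

lemma card_points_on_line: "l \<in> Lns \<Longrightarrow> card {x\<in>Pts. I x l} = s + 1"
  using GQ by (simp add: GQ_def)

lemma card_lines_through: "x \<in> Pts \<Longrightarrow> card (lines_through Lns I x) = t + 1"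
  using GQ by (simp add: GQ_def lines_through_def)

lemma line_unique:
  "\<lbrakk>x \<in> Pts; x' \<in> Pts; l \<in> Lns; m \<in> Lns; x \<noteq> x'; I x l; I x' l; I x m; I x' m\<rbrakk> \<Longrightarrow> l = m"
  using GQ unfolding GQ_def by blast

lemma proj_ex1: "\<lbrakk>x \<in> Pts; l \<in> Lns; \<not> I x l\<rbrakk> \<Longrightarrow> \<exists>!z. z \<in> Pts \<and> I z l \<and> coll x z"
  using GQ unfolding GQ_def by blast

lemma proj_unique:
  "\<lbrakk>x \<in> Pts; l \<in> Lns; \<not> I x l; z \<in> Pts; I z l; coll x z; z' \<in> Pts; I z' l; coll x z'\<rbrakk>
    \<Longrightarrow> z = z'"
  using proj_ex1 by blast

lemma P_in_Pts: "P \<in> Pts"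
  using elation_GQ by (simp add: elation_GQ_def)

lemma aut_group: "aut_group Pts Lns I G"
  using elation_GQ by (simp add: elation_GQ_def)

lemma one_in_G: "aut_one \<in> G"
  and mult_in_G: "a \<in> G \<Longrightarrow> b \<in> G \<Longrightarrow> aut_mult a b \<in> G"
  and inverse_in_G: "a \<in> G \<Longrightarrow> \<exists>b\<in>G. aut_mult a b = aut_one \<and> aut_mult b a = aut_one"
  and automorphism_G: "g \<in> G \<Longrightarrow> automorphism Pts Lns I g"
  using aut_group by (simp_all add: aut_group_def)

lemma G_point: "g \<in> G \<Longrightarrow> x \<in> Pts \<Longrightarrow> fst g x \<in> Pts"
  and G_line: "g \<in> G \<Longrightarrow> l \<in> Lns \<Longrightarrow> snd g l \<in> Lns"
  using automorphism_G unfolding automorphism_def by (meson bij_betw_apply)+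

lemma G_incidence: "g \<in> G \<Longrightarrow> x \<in> Pts \<Longrightarrow> l \<in> Lns \<Longrightarrow> I (fst g x) (snd g l) = I x l"
  using automorphism_G unfolding automorphism_def by blast

lemma G_point_inj: "g \<in> G \<Longrightarrow> x \<in> Pts \<Longrightarrow> x' \<in> Pts \<Longrightarrow> fst g x = fst g x' \<Longrightarrow> x = x'"
  and G_line_inj: "g \<in> G \<Longrightarrow> l \<in> Lns \<Longrightarrow> l' \<in> Lns \<Longrightarrow> snd g l = snd g l' \<Longrightarrow> l = l'"
  using automorphism_G unfolding automorphism_def bij_betw_def inj_on_def by blast+

lemma G_line_surj: "g \<in> G \<Longrightarrow> m \<in> Lns \<Longrightarrow> \<exists>l\<in>Lns. snd g l = m"
  using automorphism_G unfolding automorphism_def bij_betw_def by (metis imageE)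

lemma G_collinear_iff:
  assumes "g \<in> G" "x \<in> Pts" "x' \<in> Pts"
  shows "coll (fst g x) (fst g x') \<longleftrightarrow> coll x x'"
proof
  assume "coll (fst g x) (fst g x')"
  then obtain m where m: "m \<in> Lns" "I (fst g x) m" "I (fst g x') m"
    by (auto simp: collinear_def)
  then obtain l where "l \<in> Lns" "snd g l = m"
    using G_line_surj assms by blast
  then show "coll x x'"
    using m G_incidence assms collinearI by metis
next
  assume "coll x x'"
  then obtain l where "l \<in> Lns" "I x l" "I x' l"
    by (auto simp: collinear_def)
  then show "coll (fst g x) (fst g x')"
    using G_incidence G_line assms collinearI by metis
qed

lemma G_fixes_lines_through_P: "g \<in> G \<Longrightarrow> l \<in> Lns \<Longrightarrow> I P l \<Longrightarrow> snd g l = l"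
  using elation_GQ unfolding elation_GQ_def elation_def by (auto simp: aut_one_def)

lemma G_fixes_P:
  assumes "g \<in> G"
  shows "fst g P = P"
proof -
  have "\<not> card (lines_through Lns I P) \<le> Suc 0"
    using card_lines_through P_in_Pts t_ge_1 by simp
  then obtain l m where l: "l \<in> Lns" "I P l" and m: "m \<in> Lns" "I P m" and "l \<noteq> m"
    using card_le_Suc0_iff_eq[of "lines_through Lns I P"] finite_Lns
    by (auto simp: lines_through_def)
  moreover have "I (fst g P) l" "I (fst g P) m"
    using G_incidence G_fixes_lines_through_P assms l m P_in_Pts by metis+
  ultimately show ?thesis
    using line_unique[of "fst g P" P l m] G_point[OF assms P_in_Pts] P_in_Pts by blast
qed

lemma G_not_collinear_P: "g \<in> G \<Longrightarrow> x \<in> Pts \<Longrightarrow> \<not> coll P x \<Longrightarrow> \<not> coll P (fst g x)"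
  using G_collinear_iff[of g P x] G_fixes_P P_in_Pts by simp

lemma orbit_not_collinear_P: "g \<in> G \<Longrightarrow> fst g y \<in> Pts \<and> \<not> coll P (fst g y)"
  using G_point G_not_collinear_P y_in_Pts y_not_coll by blast

lemma orbit_ex1: "x \<in> Pts \<Longrightarrow> \<not> coll P x \<Longrightarrow> \<exists>!g. g \<in> G \<and> fst g y = x"
  using elation_GQ y_in_Pts y_not_coll unfolding elation_GQ_def by blast

lemma orbit_eqD: "g \<in> G \<Longrightarrow> h \<in> G \<Longrightarrow> fst g y = fst h y \<Longrightarrow> g = h"
  using orbit_ex1 orbit_not_collinear_P by metis

lemma orbit_surj: "x \<in> Pts \<Longrightarrow> \<not> coll P x \<Longrightarrow> \<exists>g\<in>G. fst g y = x"
  using orbit_ex1 by blast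

lemma finite_G: "finite G"
proof -
  have "inj_on (\<lambda>g. fst g y) G" and "(\<lambda>g. fst g y) ` G \<subseteq> Pts"
    using orbit_eqD orbit_not_collinear_P by (auto simp: inj_on_def)
  then show ?thesis
    using finite_Pts finite_imageD finite_subset by blast
qed

lemma aut_mult_left_cancel: "a \<in> G \<Longrightarrow> b \<in> G \<Longrightarrow> c \<in> G \<Longrightarrow> aut_mult a b = aut_mult a c \<Longrightarrow> b = c"
  using inverse_in_G by (metis aut_mult_assoc aut_mult_one_left)

definition is_subgroup :: "('p,'l) aut set \<Rightarrow> bool" where
  "is_subgroup H \<longleftrightarrow> H \<subseteq> G \<and> aut_one \<in> H \<and> (\<forall>a\<in>H. \<forall>b\<in>H. aut_mult a b \<in> H)"

lemma is_subgroup_G: "is_subgroup G"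
  and is_subgroup_line_stab: "is_subgroup (line_stab G M)"
  and is_subgroup_point_stab: "is_subgroup (point_stab G x)"
  using one_in_G mult_in_G by (auto simp: is_subgroup_def line_stab_def point_stab_def)

lemma Ly_iff: "M \<in> Ly \<longleftrightarrow> M \<in> Lns \<and> I y M"
  by (simp add: lines_through_def)

lemma finite_Ly: "finite Ly" and card_Ly: "card Ly = t + 1"
  using finite_Lns card_lines_through[OF y_in_Pts] by (simp_all add: lines_through_def)

lemma P_not_on_Ly: "M \<in> Ly \<Longrightarrow> \<not> I P M"
  using y_not_coll collinearI Ly_iff by metis

lemma z_of:
  assumes "M \<in> Ly"
  shows "z_of M \<in> Pts" and "I (z_of M) M" and "coll P (z_of M)"
proof -
  have "\<exists>!z. z \<in> Pts \<and> I z M \<and> coll P z"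
    using proj_ex1[OF P_in_Pts _ P_not_on_Ly[OF assms]] assms Ly_iff by blast
  from theI'[OF this] show "z_of M \<in> Pts" "I (z_of M) M" "coll P (z_of M)"
    unfolding proj_pt_def by auto
qed

lemma z_of_unique: "M \<in> Ly \<Longrightarrow> x \<in> Pts \<Longrightarrow> I x M \<Longrightarrow> coll P x \<Longrightarrow> x = z_of M"
  using proj_unique[OF P_in_Pts _ P_not_on_Ly] z_of Ly_iff by metis

lemma z_of_neq_P: "M \<in> Ly \<Longrightarrow> z_of M \<noteq> P"
  using z_of P_not_on_Ly by metis

lemma coll_y_z_of: "M \<in> Ly \<Longrightarrow> coll y (z_of M)"
  using z_of collinearI Ly_iff by metis

text \<open>\<open>g\<close> fixes the line \<open>L = Pz\<^sub>i\<close>, so if \<open>gy\<close> is collinear with \<open>z\<^sub>i\<close>, then both \<open>z\<^sub>i\<close> and \<open>gz\<^sub>i\<close>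
  are the projection of \<open>gy\<close> onto \<open>L\<close>.\<close>

lemma fixes_z_of_if_coll:
  assumes M: "M \<in> Ly" and g: "g \<in> G" and coll: "coll (fst g y) (z_of M)"
  shows "fst g (z_of M) = z_of M"
proof -
  obtain L where L: "L \<in> Lns" "I P L" "I (z_of M) L"
    using z_of(3)[OF M] unfolding collinear_def by blast
  have x: "fst g y \<in> Pts" "\<not> coll P (fst g y)"
    using orbit_not_collinear_P[OF g] by auto
  have "\<not> I (fst g y) L"
    using x L collinearI by metis
  moreover have "I (fst g (z_of M)) L"
    using G_incidence[OF g z_of(1)[OF M] L(1)] G_fixes_lines_through_P[OF g L(1,2)] L by simp
  moreover have "coll (fst g y) (fst g (z_of M))"
    using G_collinear_iff[OF g y_in_Pts z_of(1)[OF M]] coll_y_z_of[OF M] by simp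
  ultimately show ?thesis
    using proj_unique[OF x(1) L(1)] L G_point[OF g z_of(1)[OF M]] z_of(1)[OF M] coll by blast
qed

lemma coll_orbit_z_of_iff:
  assumes "M \<in> Ly" and "g \<in> G"
  shows "coll (fst g y) (z_of M) \<longleftrightarrow> fst g (z_of M) = z_of M"
  using fixes_z_of_if_coll[OF assms] G_collinear_iff[OF assms(2) y_in_Pts z_of(1)[OF assms(1)]]
    coll_y_z_of[OF assms(1)] by auto

lemma fixes_line_if_on:
  assumes M: "M \<in> Ly" and g: "g \<in> G" and on: "I (fst g y) M"
  shows "snd g M = M"
proof -
  have x: "fst g y \<in> Pts" "\<not> coll P (fst g y)"
    using orbit_not_collinear_P[OF g] by auto
  have M': "M \<in> Lns" "I y M"
    using M Ly_iff by auto
  have "fst g (z_of M) = z_of M"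
    using fixes_z_of_if_coll[OF M g] collinearI[OF M'(1) on z_of(2)[OF M]] by blast
  then have "I (z_of M) (snd g M)"
    using G_incidence[OF g z_of(1)[OF M] M'(1)] z_of(2)[OF M] by simp
  moreover have "I (fst g y) (snd g M)"
    using G_incidence[OF g y_in_Pts M'(1)] M' by simp
  moreover have "fst g y \<noteq> z_of M"
    using x z_of(3)[OF M] by metis
  ultimately show ?thesis
    using line_unique[OF x(1) z_of(1)[OF M] G_line[OF g M'(1)] M'(1)] on z_of(2)[OF M] by blast
qed

lemma line_stab_orbit_on_line:
  assumes "M \<in> Ly" and "a \<in> line_stab G M"
  shows "fst a y \<in> Pts" and "I (fst a y) M"
  using assms orbit_not_collinear_P G_incidence[of a y M] y_in_Pts by (auto simp: line_stab_def Ly_iff)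

lemma line_stab_subset_point_stab: "M \<in> Ly \<Longrightarrow> line_stab G M \<subseteq> point_stab G (z_of M)"
proof
  fix g assume M: "M \<in> Ly" and g: "g \<in> line_stab G M"
  then have "coll (fst g y) (z_of M)"
    using line_stab_orbit_on_line[OF M g] collinearI z_of(2)[OF M] M Ly_iff by blast
  then show "g \<in> point_stab G (z_of M)"
    using coll_orbit_z_of_iff[OF M] g by (simp add: line_stab_def point_stab_def)
qed

lemma bij_betw_line_stab:
  assumes M: "M \<in> Ly"
  shows "bij_betw (\<lambda>g. fst g y) (line_stab G M) ({x\<in>Pts. I x M} - {z_of M})"
  unfolding bij_betw_def
proof
  show "inj_on (\<lambda>g. fst g y) (line_stab G M)"
    using orbit_eqD by (auto simp: inj_on_def line_stab_def)
  show "(\<lambda>g. fst g y) ` line_stab G M = {x\<in>Pts. I x M} - {z_of M}"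
  proof (intro equalityI subsetI)
    fix x assume "x \<in> (\<lambda>g. fst g y) ` line_stab G M"
    then obtain g where g: "g \<in> line_stab G M" "x = fst g y"
      by blast
    moreover have "\<not> coll P (fst g y)"
      using orbit_not_collinear_P g(1) by (simp add: line_stab_def)
    ultimately show "x \<in> {x\<in>Pts. I x M} - {z_of M}"
      using line_stab_orbit_on_line[OF M g(1)] z_of(3)[OF M] by auto
  next
    fix x assume x: "x \<in> {x\<in>Pts. I x M} - {z_of M}"
    then have "\<not> coll P x"
      using z_of_unique[OF M] by blast
    then obtain g where g: "g \<in> G" "fst g y = x"
      using orbit_surj x by blast
    then have "g \<in> line_stab G M"
      using fixes_line_if_on[OF M g(1)] x by (simp add: line_stab_def)
    then show "x \<in> (\<lambda>g. fst g y) ` line_stab G M"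
      using g(2) by blast
  qed
qed

lemma card_line_stab:
  assumes M: "M \<in> Ly"
  shows "card (line_stab G M) = s"
proof -
  have "card ({x\<in>Pts. I x M} - {z_of M}) = s"
    using card_points_on_line z_of(1,2)[OF M] M by (simp add: Ly_iff card_Diff_singleton)
  then show ?thesis
    using bij_betw_same_card[OF bij_betw_line_stab[OF M]] by simp
qed

lemma bij_betw_point_stab:
  assumes M: "M \<in> Ly"
  shows "bij_betw (\<lambda>g. fst g y) (point_stab G (z_of M))
           {x\<in>Pts. \<not> coll P x \<and> coll x (z_of M)}"
  unfolding bij_betw_def
proof
  show "inj_on (\<lambda>g. fst g y) (point_stab G (z_of M))"
    using orbit_eqD by (auto simp: inj_on_def point_stab_def)
  show "(\<lambda>g. fst g y) ` point_stab G (z_of M) = {x\<in>Pts. \<not> coll P x \<and> coll x (z_of M)}"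
  proof (intro equalityI subsetI)
    fix x assume "x \<in> (\<lambda>g. fst g y) ` point_stab G (z_of M)"
    then obtain g where g: "g \<in> G" "fst g (z_of M) = z_of M" "x = fst g y"
      by (auto simp: point_stab_def)
    then show "x \<in> {x\<in>Pts. \<not> coll P x \<and> coll x (z_of M)}"
      using coll_orbit_z_of_iff[OF M g(1)] orbit_not_collinear_P[OF g(1)] by simp
  next
    fix x assume x: "x \<in> {x\<in>Pts. \<not> coll P x \<and> coll x (z_of M)}"
    then obtain g where g: "g \<in> G" "fst g y = x"
      using orbit_surj by blast
    then have "g \<in> point_stab G (z_of M)"
      using fixes_z_of_if_coll[OF M g(1)] x by (simp add: point_stab_def)
    then show "x \<in> (\<lambda>g. fst g y) ` point_stab G (z_of M)"
      using g(2) by blast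
  qed
qed

text \<open>The points collinear with \<open>z\<^sub>i\<close> but not with \<open>P\<close> are those \<open>\<noteq> z\<^sub>i\<close> on the \<open>t\<close>
  lines through \<open>z\<^sub>i\<close> other than \<open>Pz\<^sub>i\<close>.\<close>

lemma card_opposite_points_collinear_z_of:
  assumes M: "M \<in> Ly"
  shows "card {x\<in>Pts. \<not> coll P x \<and> coll x (z_of M)} = s * t"
proof -
  let ?z = "z_of M"
  obtain L where L: "L \<in> Lns" "I P L" "I ?z L"
    using z_of(3)[OF M] unfolding collinear_def by blast
  have z: "?z \<in> Pts" "?z \<noteq> P"
    using z_of(1) z_of_neq_P M by auto
  let ?Ls = "lines_through Lns I ?z - {L}"
  let ?B = "\<lambda>N. {x\<in>Pts. I x N} - {?z}"
  have eq: "{x\<in>Pts. \<not> coll P x \<and> coll x ?z} = (\<Union>N\<in>?Ls. ?B N)"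
  proof (intro equalityI subsetI)
    fix x assume "x \<in> {x\<in>Pts. \<not> coll P x \<and> coll x ?z}"
    then have x: "x \<in> Pts" "\<not> coll P x" "coll x ?z"
      by auto
    then obtain N where N: "N \<in> Lns" "I x N" "I ?z N"
      by (auto simp: collinear_def)
    have "N \<noteq> L"
      using collinearI[OF L(1,2)] N(2) x(2) by blast
    moreover have "x \<noteq> ?z"
      using x(2) z_of(3)[OF M] by blast
    ultimately have "N \<in> ?Ls" "x \<in> ?B N"
      using x(1) N by (simp_all add: lines_through_def)
    then show "x \<in> (\<Union>N\<in>?Ls. ?B N)"
      by blast
  next
    fix x assume "x \<in> (\<Union>N\<in>?Ls. ?B N)"
    then obtain N where N: "N \<in> Lns" "I ?z N" "N \<noteq> L" and x: "x \<in> Pts" "I x N" "x \<noteq> ?z"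
      by (auto simp: lines_through_def)
    have xz: "coll x ?z"
      using collinearI[OF N(1) x(2) N(2)] .
    have "\<not> I x L"
    proof
      assume "I x L"
      then show False
        using line_unique[OF x(1) z(1) N(1) L(1) x(3) x(2) N(2)] L(3) N(3) by blast
    qed
    have "\<not> coll P x"
    proof
      assume "coll P x"
      then have "P = ?z"
        using proj_unique[OF x(1) L(1) \<open>\<not> I x L\<close> P_in_Pts L(2) _ z(1) L(3) xz] collinear_sym
        by blast
      then show False
        using z(2) by simp
    qed
    then show "x \<in> {x\<in>Pts. \<not> coll P x \<and> coll x ?z}"
      using x(1) xz by simp
  qed
  have "card (\<Union>N\<in>?Ls. ?B N) = (\<Sum>N\<in>?Ls. card (?B N))"
    using finite_Lns finite_Pts line_unique z(1)
    by (intro card_UN_disjoint) (auto simp: lines_through_def)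
  also have "\<dots> = (\<Sum>N\<in>?Ls. s)"
    using card_points_on_line z(1) by (intro sum.cong) (auto simp: lines_through_def card_Diff_singleton)
  also have "\<dots> = s * t"
    using card_lines_through[OF z(1)] L by (simp add: lines_through_def card_Diff_singleton)
  finally show ?thesis
    using eq by simp
qed

lemma card_point_stab: "M \<in> Ly \<Longrightarrow> card (point_stab G (z_of M)) = s * t"
  using bij_betw_same_card[OF bij_betw_point_stab] card_opposite_points_collinear_z_of by simp

abbreviation Delta_without where
  "Delta_without M \<equiv> \<Union>N\<in>Ly - {M}. line_stab G N - {aut_one}"

lemma Delta_without_subset: "Delta_without M \<subseteq> G"
  by (auto simp: line_stab_def)

lemma nontrivial_line_stabs_disjoint:
  assumes N: "N \<in> Ly" "N' \<in> Ly" "N \<noteq> N'"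
  shows "(line_stab G N - {aut_one}) \<inter> (line_stab G N' - {aut_one}) = {}"
proof (rule ccontr)
  assume "\<not> ?thesis"
  then obtain b where b: "b \<in> G" "snd b N = N" "snd b N' = N'" "b \<noteq> aut_one"
    by (auto simp: line_stab_def)
  have L: "N \<in> Lns" "I y N" "N' \<in> Lns" "I y N'"
    using N Ly_iff by auto
  then have "I (fst b y) N" "I (fst b y) N'"
    using G_incidence[OF b(1) y_in_Pts] b(2,3) by metis+
  then have "fst b y = fst aut_one y"
    using line_unique[OF G_point[OF b(1) y_in_Pts] y_in_Pts L(1) L(3)] L N(3) by auto
  then show False
    using orbit_eqD[OF b(1) one_in_G] b(4) by simp
qed

lemma product_point:
  assumes M: "M \<in> Ly" and a: "a \<in> line_stab G M" and b: "b \<in> Delta_without M"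
  shows "\<not> I (fst a (fst b y)) M" and "coll (fst a (fst b y)) (fst a y)"
    and "\<not> coll (fst a (fst b y)) (z_of M)"
proof -
  obtain N where N: "N \<in> Lns" "I y N" "N \<noteq> M" and b: "b \<in> G" "snd b N = N" "b \<noteq> aut_one"
    using b by (auto simp: line_stab_def lines_through_def)
  have a: "a \<in> G" "snd a M = M"
    using a by (auto simp: line_stab_def)
  have M': "M \<in> Lns" "I y M"
    using M Ly_iff by auto
  define v where "v = fst b y"
  have v: "v \<in> Pts" "I v N"
    using G_point[OF b(1) y_in_Pts] G_incidence[OF b(1) y_in_Pts N(1)] b(2) N(2) by (simp_all add: v_def)
  have "v \<noteq> y"
    using orbit_eqD[OF b(1) one_in_G] b(3) by (auto simp: v_def)
  then have av_neq_ay: "fst a v \<noteq> fst a y"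
    using G_point_inj[OF a(1) v(1) y_in_Pts] by blast
  have aN: "snd a N \<in> Lns" "I (fst a v) (snd a N)" "I (fst a y) (snd a N)"
    using G_line[OF a(1) N(1)] G_incidence[OF a(1) _ N(1)] v y_in_Pts N(2) by auto
  have w: "fst a y \<in> Pts" "I (fst a y) M" "\<not> coll P (fst a y)"
    using orbit_not_collinear_P[OF a(1)] G_incidence[OF a(1) y_in_Pts M'(1)] a(2) M'(2) by auto
  show av_coll_ay: "coll (fst a v) (fst a y)"
    using collinearI[OF aN] .
  show av_not_on_M: "\<not> I (fst a v) M"
  proof
    assume "I (fst a v) M"
    then have "snd a N = snd a M"
      using line_unique[OF G_point[OF a(1) v(1)] w(1) aN(1) M'(1) av_neq_ay aN(2,3)] w(2) a(2) by simp
    then show False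
      using G_line_inj[OF a(1) N(1) M'(1)] N(3) by blast
  qed
  show "\<not> coll (fst a v) (z_of M)"
  proof
    assume "coll (fst a v) (z_of M)"
    then have "fst a y = z_of M"
      using proj_unique[OF G_point[OF a(1) v(1)] M'(1) av_not_on_M w(1,2) av_coll_ay] z_of[OF M] by blast
    then show False
      using w(3) z_of(3)[OF M] by simp
  qed
qed

lemma product_unique:
  assumes M: "M \<in> Ly"
    and ab: "a \<in> line_stab G M" "b \<in> Delta_without M"
    and ab': "a' \<in> line_stab G M" "b' \<in> Delta_without M"
    and eq: "aut_mult a b = aut_mult a' b'"
  shows "a = a' \<and> b = b'"
proof -
  have G: "a \<in> G" "b \<in> G" "a' \<in> G" "b' \<in> G"
    using ab ab' by (auto simp: line_stab_def)
  define x where "x = fst a (fst b y)"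
  have x: "x = fst a' (fst b' y)"
    using arg_cong[OF eq, of "\<lambda>g. fst g y"] by (simp add: x_def)
  have "M \<in> Lns"
    using M Ly_iff by simp
  moreover have "x \<in> Pts" "\<not> I x M" "coll x (fst a y)"
    using G_point G product_point[OF M ab] y_in_Pts by (simp_all add: x_def)
  moreover have "coll x (fst a' y)"
    using product_point(2)[OF M ab'] by (simp add: x)
  moreover note line_stab_orbit_on_line[OF M ab(1)] line_stab_orbit_on_line[OF M ab'(1)]
  ultimately have "fst a y = fst a' y"
    using proj_unique by blast
  then have "a = a'"
    using orbit_eqD G by blast
  then show ?thesis
    using aut_mult_left_cancel[OF G(1,2,4)] eq by simp
qed

lemma line_stab_orbit_proj:
  assumes M: "M \<in> Ly" and x: "x \<in> Pts" "\<not> I x M" and not_coll: "\<not> coll x (z_of M)"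
  obtains a where "a \<in> line_stab G M" "coll x (fst a y)"
proof -
  obtain w where w: "w \<in> Pts" "I w M" "coll x w"
    using proj_ex1[OF x(1) _ x(2)] M Ly_iff by blast
  have "\<not> coll P w"
    using z_of_unique[OF M w(1,2)] w(3) not_coll by blast
  then obtain a where a: "a \<in> G" "fst a y = w"
    using orbit_surj w(1) by blast
  then have "a \<in> line_stab G M"
    using fixes_line_if_on[OF M a(1)] w(2) by (simp add: line_stab_def)
  then show ?thesis
    using that a(2) w(3) by blast
qed

lemma product_exists:
  assumes M: "M \<in> Ly" and g: "g \<in> G" and not_coll: "\<not> coll (fst g y) (z_of M)"
  obtains a b where "a \<in> line_stab G M" "b \<in> Delta_without M" "g = aut_mult a b"
proof -
  let ?x = "fst g y"
  have x: "?x \<in> Pts" "\<not> I ?x M"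
    using orbit_not_collinear_P[OF g] not_coll collinearI z_of(2)[OF M] M Ly_iff by blast+
  obtain a where a: "a \<in> line_stab G M" "coll ?x (fst a y)"
    using line_stab_orbit_proj[OF M x not_coll] by blast
  have aG: "a \<in> G" "snd a M = M"
    using a(1) by (simp_all add: line_stab_def)
  obtain a' where a': "a' \<in> G" "aut_mult a a' = aut_one" "aut_mult a' a = aut_one"
    using inverse_in_G[OF aG(1)] by blast
  define b where "b = aut_mult a' g"
  have b: "b \<in> G" "g = aut_mult a b"
    using mult_in_G[OF a'(1) g] a'(2) by (simp_all add: b_def aut_mult_assoc[symmetric])
  obtain L where L: "L \<in> Lns" "I ?x L" "I (fst a y) L"
    using a(2) by (auto simp: collinear_def)
  define N where "N = snd a' L"
  have "I y N"
    using G_incidence[OF a'(1) line_stab_orbit_on_line(1)[OF M a(1)] L(1)] L(3)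
      arg_cong[OF a'(3), of "\<lambda>h. fst h y"] by (simp add: N_def)
  then have N: "N \<in> Ly"
    using G_line[OF a'(1) L(1)] by (simp add: Ly_iff N_def)
  have "snd a N = L"
    using arg_cong[OF a'(2), of "\<lambda>h. snd h L"] by (simp add: N_def)
  then have "N \<noteq> M"
    using aG(2) L(2) x(2) by auto
  moreover have "I (fst b y) N"
    using G_incidence[OF a'(1) x(1) L(1)] L(2) by (simp add: N_def b_def)
  then have "snd b N = N"
    using fixes_line_if_on[OF N b(1)] by blast
  moreover have "b \<noteq> aut_one"
    using b(2) line_stab_orbit_on_line(2)[OF M a(1)] x(2) by auto
  ultimately have "b \<in> Delta_without M"
    using N b(1) by (auto simp: line_stab_def)
  then show ?thesis
    using that a(1) b(2) by blast
qed

text \<open>In the group ring: \<open>G - A\<^sub>0\<^sup>* = A\<^sub>0 (\<Delta> - A\<^sub>0 + 1)\<close>.\<close>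

lemma bij_betw_product:
  assumes M: "M \<in> Ly"
  shows "bij_betw (\<lambda>(a, b). aut_mult a b) (line_stab G M \<times> Delta_without M)
           (G - point_stab G (z_of M))"
  unfolding bij_betw_def
proof
  show "inj_on (\<lambda>(a, b). aut_mult a b) (line_stab G M \<times> Delta_without M)"
  proof (rule inj_onI)
    fix p q
    assume p: "p \<in> line_stab G M \<times> Delta_without M" and q: "q \<in> line_stab G M \<times> Delta_without M"
      and eq: "(\<lambda>(a, b). aut_mult a b) p = (\<lambda>(a, b). aut_mult a b) q"
    obtain a b a' b' where ab: "p = (a, b)" "q = (a', b')"
      by (metis surj_pair)
    have "a = a' \<and> b = b'"
      using p q eq unfolding ab by (intro product_unique[OF M]) simp_all
    then show "p = q"
      using ab by simp
  qed
  show "(\<lambda>(a, b). aut_mult a b) ` (line_stab G M \<times> Delta_without M) = G - point_stab G (z_of M)"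
  proof (intro equalityI subsetI)
    fix g assume "g \<in> (\<lambda>(a, b). aut_mult a b) ` (line_stab G M \<times> Delta_without M)"
    then obtain a b where ab: "a \<in> line_stab G M" "b \<in> Delta_without M" "g = aut_mult a b"
      by (elim imageE SigmaE) fastforce
    then have "g \<in> G"
      using mult_in_G by (auto simp: line_stab_def)
    moreover have "\<not> coll (fst g y) (z_of M)"
      using product_point(3)[OF M ab(1,2)] ab(3) by simp
    ultimately show "g \<in> G - point_stab G (z_of M)"
      using coll_orbit_z_of_iff[OF M] by (simp add: point_stab_def)
  next
    fix g assume "g \<in> G - point_stab G (z_of M)"
    then have "g \<in> G" "\<not> coll (fst g y) (z_of M)"
      using coll_orbit_z_of_iff[OF M] by (auto simp: point_stab_def)
    then obtain a b where "a \<in> line_stab G M" "b \<in> Delta_without M" "g = aut_mult a b"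
      using product_exists[OF M] by blast
    then show "g \<in> (\<lambda>(a, b). aut_mult a b) ` (line_stab G M \<times> Delta_without M)"
      by (intro rev_image_eqI[of "(a, b)"]) simp_all
  qed
qed

end

locale elation_gq_character = elation_gq +
  fixes \<chi>
  assumes linear_character: "linear_character G \<chi>" and nonprincipal: "\<exists>g\<in>G. \<chi> g \<noteq> 1"
begin

abbreviation K where "K \<equiv> char_ker G \<chi>"
abbreviation U where "U \<equiv> {M \<in> Ly. line_stab G M \<subseteq> K}"
abbreviation U' where "U' \<equiv> {M \<in> Ly. point_stab G (z_of M) \<subseteq> K}"

lemma char_mult: "a \<in> G \<Longrightarrow> b \<in> G \<Longrightarrow> \<chi> (aut_mult a b) = \<chi> a * \<chi> b"
  using linear_character by (simp add: linear_character_def)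

lemma char_one: "\<chi> aut_one = 1"
proof -
  have "\<chi> aut_one * \<chi> aut_one = \<chi> aut_one * 1" and "\<chi> aut_one \<noteq> 0"
    using char_mult[OF one_in_G one_in_G] linear_character one_in_G
    by (simp_all add: linear_character_def)
  then show ?thesis
    using mult_left_cancel by blast
qed

lemma sum_char_subgroup:
  assumes H: "is_subgroup H"
  shows "(\<Sum>g\<in>H. \<chi> g) = (if H \<subseteq> K then of_nat (card H) else 0)"
proof (cases "H \<subseteq> K")
  case True
  then have "\<chi> g = 1" if "g \<in> H" for g
    using that char_one by (auto simp: char_ker_def)
  then show ?thesis
    using True by simp
next
  case False
  then obtain a where a: "a \<in> H" "\<chi> a \<noteq> 1"
    using H char_one by (auto simp: char_ker_def is_subgroup_def)
  have HG: "H \<subseteq> G"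
    using H by (simp add: is_subgroup_def)
  have "inj_on (aut_mult a) H"
    using aut_mult_left_cancel a(1) HG by (meson inj_onI subsetD)
  moreover have "aut_mult a ` H \<subseteq> H"
    using H a(1) by (auto simp: is_subgroup_def)
  ultimately have "bij_betw (aut_mult a) H H"
    using endo_inj_surj[OF finite_subset[OF HG finite_G]] by (simp add: bij_betw_def)
  then have "(\<Sum>g\<in>H. \<chi> g) = 0"
    using sum_eq_0_if_scaled_by_permutation[where c = "\<chi> a"] char_mult a HG by blast
  then show ?thesis
    using False by simp
qed

lemma sum_char_G: "(\<Sum>g\<in>G. \<chi> g) = 0"
  using sum_char_subgroup[OF is_subgroup_G] nonprincipal char_one by (auto simp: char_ker_def)

lemma sum_char_subgroup_nontrivial:
  assumes "is_subgroup H"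
  shows "(\<Sum>g\<in>H - {aut_one}. \<chi> g) = (if H \<subseteq> K then of_nat (card H) else 0) - 1"
  using assms sum_diff1[of H \<chi> aut_one] finite_subset[OF _ finite_G] sum_char_subgroup char_one
  by (simp add: is_subgroup_def)

lemma sum_over_Ly_nontrivial:
  assumes "\<And>M. M \<in> Ly \<Longrightarrow> is_subgroup (H M)" and "\<And>M. M \<in> Ly \<Longrightarrow> card (H M) = c"
  shows "(\<Sum>M\<in>Ly. \<Sum>g\<in>H M - {aut_one}. \<chi> g)
           = of_nat c * of_nat (card {M \<in> Ly. H M \<subseteq> K}) - of_nat t - 1"
proof -
  have "(\<Sum>M\<in>Ly. \<Sum>g\<in>H M - {aut_one}. \<chi> g) = (\<Sum>M\<in>Ly. (if H M \<subseteq> K then of_nat c else 0) - 1)"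
    using assms sum_char_subgroup_nontrivial by (intro sum.cong) simp_all
  also have "\<dots> = (\<Sum>M\<in>Ly. if H M \<subseteq> K then of_nat c else 0) - of_nat (card Ly)"
    by (simp add: sum_subtractf)
  also have "(\<Sum>M\<in>Ly. if H M \<subseteq> K then of_nat c else 0) = (\<Sum>M\<in>{M \<in> Ly. H M \<subseteq> K}. (of_nat c :: complex))"
    by (rule sum.inter_filter[OF finite_Ly, symmetric])
  finally show ?thesis
    using card_Ly by (simp add: mult.commute)
qed

lemma sum_char_Delta:
  "(\<Sum>M\<in>Ly. \<Sum>g\<in>line_stab G M - {aut_one}. \<chi> g) = of_nat s * of_nat (card U) - of_nat t - 1"
  using sum_over_Ly_nontrivial[OF is_subgroup_line_stab card_line_stab] .

lemma sum_char_Delta_star: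
  "(\<Sum>M\<in>Ly. \<Sum>g\<in>point_stab G (z_of M) - {aut_one}. \<chi> g)
     = of_nat s * of_nat t * of_nat (card U') - of_nat t - 1"
  using sum_over_Ly_nontrivial[OF is_subgroup_point_stab card_point_stab] by simp

lemma sum_char_Delta_without:
  assumes "M \<in> Ly"
  shows "(\<Sum>g\<in>Delta_without M. \<chi> g) = (\<Sum>N\<in>Ly - {M}. \<Sum>g\<in>line_stab G N - {aut_one}. \<chi> g)"
proof (rule sum.UNION_disjoint)
  show "finite (Ly - {M})"
    using finite_Ly by simp
  show "\<forall>N\<in>Ly - {M}. finite (line_stab G N - {aut_one})"
    using finite_G by (simp add: line_stab_def)
  show "\<forall>N\<in>Ly - {M}. \<forall>N'\<in>Ly - {M}. N \<noteq> N' \<longrightarrow>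
          (line_stab G N - {aut_one}) \<inter> (line_stab G N' - {aut_one}) = {}"
    using nontrivial_line_stabs_disjoint by blast
qed

lemma sum_char_relation:
  assumes M: "M \<in> Ly"
  shows "(\<Sum>g\<in>point_stab G (z_of M). \<chi> g)
           + (\<Sum>a\<in>line_stab G M. \<chi> a) * (\<Sum>b\<in>Delta_without M. \<chi> b) = 0"
proof -
  have "(\<Sum>a\<in>line_stab G M. \<chi> a) * (\<Sum>b\<in>Delta_without M. \<chi> b)
      = (\<Sum>(a, b)\<in>line_stab G M \<times> Delta_without M. \<chi> a * \<chi> b)"
    by (simp add: sum_product sum.cartesian_product)
  also have "\<dots> = (\<Sum>(a, b)\<in>line_stab G M \<times> Delta_without M. \<chi> (aut_mult a b))"
  proof (rule sum.cong[OF refl])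
    fix p assume "p \<in> line_stab G M \<times> Delta_without M"
    then have "fst p \<in> G" "snd p \<in> G"
      using Delta_without_subset is_subgroup_line_stab unfolding mem_Times_iff is_subgroup_def
      by blast+
    then show "(case p of (a, b) \<Rightarrow> \<chi> a * \<chi> b) = (case p of (a, b) \<Rightarrow> \<chi> (aut_mult a b))"
      by (simp add: case_prod_unfold char_mult)
  qed
  also have "\<dots> = (\<Sum>g\<in>G - point_stab G (z_of M). \<chi> g)"
    using sum.reindex_bij_betw[OF bij_betw_product[OF M]] by (simp add: case_prod_unfold)
  finally show ?thesis
    using sum.subset_diff[of "point_stab G (z_of M)" G \<chi>] finite_G sum_char_G
    by (simp add: point_stab_def add.commute)
qed

lemma U'_subset_U: "U' \<subseteq> U"
  using line_stab_subset_point_stab by blast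

lemma sum_char_Delta_without_if_in_U:
  assumes "M \<in> U"
  shows "(\<Sum>g\<in>Delta_without M. \<chi> g) = of_nat s * of_nat (card U) - of_nat t - of_nat s"
proof -
  have M: "M \<in> Ly"
    using assms by simp
  have "(\<Sum>g\<in>Delta_without M. \<chi> g)
      = (\<Sum>N\<in>Ly. \<Sum>g\<in>line_stab G N - {aut_one}. \<chi> g) - (\<Sum>g\<in>line_stab G M - {aut_one}. \<chi> g)"
    using sum_char_Delta_without[OF M] M
      sum_diff1[OF finite_Ly, of "\<lambda>N. \<Sum>g\<in>line_stab G N - {aut_one}. \<chi> g" M]
    by simp
  then show ?thesis
    using sum_char_Delta sum_char_subgroup_nontrivial[OF is_subgroup_line_stab] card_line_stab[OF M]
      assms by simp
qed

lemma card_U_if_in_U':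
  assumes "M \<in> U'"
  shows "card U = 1"
proof -
  have M: "M \<in> Ly" "M \<in> U"
    using assms U'_subset_U by auto
  have "of_nat s * of_nat t + of_nat s * (of_nat s * of_nat (card U) - of_nat t - of_nat s) = (0 :: complex)"
    using sum_char_relation[OF M(1)] sum_char_subgroup[OF is_subgroup_point_stab]
      sum_char_subgroup[OF is_subgroup_line_stab] card_point_stab[OF M(1)] card_line_stab[OF M(1)]
      sum_char_Delta_without_if_in_U[OF M(2)] M(2) assms by simp
  then have "of_nat s * (of_nat (s * card U) - of_nat s) = (0 :: complex)"
    by (simp add: algebra_simps)
  then have "s * card U = s"
    using s_ge_1 by simp
  then show ?thesis
    using s_ge_1 by simp
qed

lemma card_U_if_in_U_not_in_U':
  assumes "M \<in> U" and "M \<notin> U'"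
  shows "s * card U = s + t"
proof -
  have M: "M \<in> Ly"
    using assms by simp
  have "of_nat s * (of_nat s * of_nat (card U) - of_nat t - of_nat s) = (0 :: complex)"
    using sum_char_relation[OF M] sum_char_subgroup[OF is_subgroup_point_stab]
      sum_char_subgroup[OF is_subgroup_line_stab] card_line_stab[OF M]
      sum_char_Delta_without_if_in_U[OF assms(1)] assms by simp
  then have "of_nat s * of_nat (card U) - of_nat t - of_nat s = (0 :: complex)"
    using s_ge_1 by simp
  then have "of_nat (s * card U) = (of_nat (s + t) :: complex)"
    by (simp add: algebra_simps)
  then show ?thesis
    using of_nat_eq_iff by blast
qed

lemma card_U_U'_cases:
  "(real (card U), real (card U')) \<in> {(1, 1), (0, 0), (real t / real s + 1, 0)}"
proof (cases "U' = {}")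
  case False
  then obtain M where M: "M \<in> U'"
    by blast
  then have "card U = 1"
    by (rule card_U_if_in_U')
  then obtain M' where U: "U = {M'}"
    by (rule card_1_singletonE)
  have "M \<in> U"
    using subsetD[OF U'_subset_U M] .
  then have "U = {M}"
    using U by simp
  then have "U' = {M}"
    using M U'_subset_U subset_singletonD by fastforce
  then show ?thesis
    using \<open>card U = 1\<close> by simp
next
  case True
  show ?thesis
  proof (cases "U = {}")
    case True
    then have "card U = 0" "card U' = 0"
      using \<open>U' = {}\<close> by (simp_all only: card.empty)
    then show ?thesis
      by simp
  next
    case False
    then obtain M where "M \<in> U" "M \<notin> U'"
      using \<open>U' = {}\<close> by blast
    then have "s * card U = s + t"
      by (rule card_U_if_in_U_not_in_U')
    then have "real s * real (card U) = real s + real t"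
      by (metis of_nat_add of_nat_mult)
    then have "real (card U) = real t / real s + 1"
      using s_ge_1 by (simp add: field_simps)
    moreover have "card U' = 0"
      using \<open>U' = {}\<close> by (simp only: card.empty)
    ultimately show ?thesis
      by simp
  qed
qed

end

theorem proposition2p4:
  fixes Pts :: "'p set" and Lns :: "'l set" and I :: "'p \<Rightarrow> 'l \<Rightarrow> bool"
    and s t :: nat and P y :: 'p and G :: "('p,'l) aut set"
    and \<chi> :: "('p,'l) aut \<Rightarrow> complex"
  assumes "finite Pts" and "finite Lns"
    and "elation_GQ Pts Lns I s t P G"
    and "y \<in> Pts" and "\<not> collinear I Lns P y"
    and "linear_character G \<chi>" and "\<exists>g\<in>G. \<chi> g \<noteq> 1"
  defines "u \<equiv> card {M \<in> lines_through Lns I y. line_stab G M \<subseteq> char_ker G \<chi>}"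
    and "u' \<equiv> card {M \<in> lines_through Lns I y.
                      point_stab G (proj_pt Pts Lns I P M) \<subseteq> char_ker G \<chi>}"
  shows "(\<Sum>M\<in>lines_through Lns I y. \<Sum>g\<in>line_stab G M - {aut_one}. \<chi> g)
           = of_nat s * of_nat u - of_nat t - 1 \<and>
         (\<Sum>M\<in>lines_through Lns I y.
            \<Sum>g\<in>point_stab G (proj_pt Pts Lns I P M) - {aut_one}. \<chi> g)
           = of_nat s * of_nat t * of_nat u' - of_nat t - 1 \<and>
         (real u, real u') \<in> {(1, 1), (0, 0), (real t / real s + 1, 0)}"
proof -
  interpret elation_gq_character Pts Lns I s t P y G \<chi>
    by unfold_locales (use assms in auto)
  show ?thesis
    unfolding u_def u'_def using sum_char_Delta sum_char_Delta_star card_U_U'_cases by blast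
qed

end
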